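(* Suppose $(\mu^{(k)},w^{(k)})$ is an exact minimizer of rQEPmin, let $y^{(k)}=(T_k-\mu^{(k)}I)w^{(k)}$ and $z^{(k)}=Q_kw^{(k)}$. Then the residual $r_k=(PAP-\mu^{(k)}I)^2z^{(k)}-\gamma^{-2}b_0b_0^{\top}z^{(k)}$ satisfies $r_k=\beta_{k+1}q_{k+1}e_k^{\top}y^{(k)}+\beta_{k+1}(PAP-\mu^{(k)}I)q_{k+1}e_k^{\top}w^{(k)}$, where $\beta_{k+1}q_{k+1}$ denotes $\widehat q_{k+1}$.
   Context: Let $A\in\mathbb{R}^{n\times n}$ be symmetric, $C\in\mathbb{R}^{n\times m}$ full column rank, $P=I-C(C^{\top}C)^{-1}C^{\top}$, $0\ne b_0\in\mathcal N(C^{\top})$, $\gamma>0$. Lanczos process with $M=PAP$: $q_0=0$, $\beta_1=\|b_0\|$, $q_1=b_0/\|b_0\|$, for $j=1,2,\dots$: $\alpha_j=q_j^{\top}Mq_j$, $\widehat q_{j+1}=Mq_j-\alpha_jq_j-\beta_jq_{j-1}$, $\beta_{j+1}=\|\widehat q_{j+1}\|$, $q_{j+1}=\widehat q_{j+1}/\beta_{j+1}$ when $\beta_{j+1}>0$; assume $\beta_j\ne0$ for $j=2,\dots,k$. $Q_k=[q_1,\dots,q_k]$, $T_k=Q_k^{\top}PAPQ_k$ (tridiagonal). rQEPmin: minimize $\lambda$ over $\lambda\in\mathbb{R}$, $0\ne w\in\mathbb{R}^k$ with $(T_k-\lambda I)^2w=\gamma^{-2}\|b_0\|^2e_1e_1^{\top}w$.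 *)

theory Defs
  imports "HOL-Analysis.Analysis"
begin

definition proj_null :: "real^'m^'n \<Rightarrow> real^'n^'n" where
  "proj_null C = mat 1 - C ** matrix_inv (transpose C ** C) ** transpose C"

text \<open>Lanczos process for a matrix M started at b.
  lanczos_state M b j = (q_j, q_(j+1), beta_(j+1)), with q_0 = 0, q_1 = b / norm b,
  beta_1 = norm b.  (Division by a zero beta yields 0 by Isabelle's convention;
  this case is excluded by the hypotheses where it matters.)\<close>
fun lanczos_state :: "real^'n^'n \<Rightarrow> real^'n \<Rightarrow> nat \<Rightarrow> (real^'n) \<times> (real^'n) \<times> real" where
  "lanczos_state M b 0 = (0, (1 / norm b) *\<^sub>R b, norm b)"
| "lanczos_state M b (Suc j) =
     (let (qp, qc, bc) = lanczos_state M b j;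
          a = qc \<bullet> (M *v qc);
          h = M *v qc - a *\<^sub>R qc - bc *\<^sub>R qp
      in (qc, (1 / norm h) *\<^sub>R h, norm h))"

definition lanczos_q :: "real^'n^'n \<Rightarrow> real^'n \<Rightarrow> nat \<Rightarrow> real^'n" where
  "lanczos_q M b j = fst (lanczos_state M b j)"

definition lanczos_beta :: "real^'n^'n \<Rightarrow> real^'n \<Rightarrow> nat \<Rightarrow> real" where
  "lanczos_beta M b j = snd (snd (lanczos_state M b (j - 1)))"

definition lanczos_alpha :: "real^'n^'n \<Rightarrow> real^'n \<Rightarrow> nat \<Rightarrow> real" where
  "lanczos_alpha M b j = lanczos_q M b j \<bullet> (M *v lanczos_q M b j)"

definition lanczos_qhat :: "real^'n^'n \<Rightarrow> real^'n \<Rightarrow> nat \<Rightarrow> real^'n" where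
  "lanczos_qhat M b j = M *v lanczos_q M b (j - 1)
      - lanczos_alpha M b (j - 1) *\<^sub>R lanczos_q M b (j - 1)
      - lanczos_beta M b (j - 1) *\<^sub>R lanczos_q M b (j - 2)"

text \<open>Entries of T_k = Q_k' M Q_k, indices 1..k.\<close>
definition lanczos_T :: "real^'n^'n \<Rightarrow> real^'n \<Rightarrow> nat \<Rightarrow> nat \<Rightarrow> real" where
  "lanczos_T M b i j = lanczos_q M b i \<bullet> (M *v lanczos_q M b j)"

text \<open>Vectors in R^k are represented as functions nat => real, only indices 1..k matter.
  shifted_apply T lam k w = (T_k - lam I) w.\<close>
definition shifted_apply :: "(nat \<Rightarrow> nat \<Rightarrow> real) \<Rightarrow> real \<Rightarrow> nat \<Rightarrow> (nat \<Rightarrow> real) \<Rightarrow> nat \<Rightarrow> real" where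
  "shifted_apply T lam k w = (\<lambda>i. (\<Sum>j\<in>{1..k}. T i j * w j) - lam * w i)"

definition rQEP_feasible :: "(nat \<Rightarrow> nat \<Rightarrow> real) \<Rightarrow> nat \<Rightarrow> real \<Rightarrow> real \<Rightarrow> real \<Rightarrow> (nat \<Rightarrow> real) \<Rightarrow> bool" where
  "rQEP_feasible T k gamma nb lam w \<longleftrightarrow>
     (\<exists>i\<in>{1..k}. w i \<noteq> 0) \<and>
     (\<forall>i\<in>{1..k}. shifted_apply T lam k (shifted_apply T lam k w) i
                 = (1 / gamma^2) * nb^2 * (if i = 1 then w 1 else 0))"

definition rQEPmin_minimizer :: "(nat \<Rightarrow> nat \<Rightarrow> real) \<Rightarrow> nat \<Rightarrow> real \<Rightarrow> real \<Rightarrow> real \<Rightarrow> (nat \<Rightarrow> real) \<Rightarrow> bool" where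
  "rQEPmin_minimizer T k gamma nb lam w \<longleftrightarrow>
     rQEP_feasible T k gamma nb lam w \<and>
     (\<forall>lam' w'. rQEP_feasible T k gamma nb lam' w' \<longrightarrow> lam \<le> lam')"

end

theory Submission
  imports Defs
begin

text \<open>Since P is symmetric, so is M = PAP, and the Lanczos vectors q_1, ..., q_k are then
  orthonormal. This yields the Lanczos relation M Q_k = Q_k T_k + qhat_(k+1) e_k', i.e.
  (M - mu I) Q_k v = Q_k (T_k - mu I) v + v_k qhat_(k+1). Applying it twice to z = Q_k w leaves
  Q_k (T_k - mu I)^2 w plus the two claimed terms; by feasibility of (mu, w) the first term is
  gamma^-2 norm(b0)^2 w_1 q_1, which equals gamma^-2 b0 b0' z because b0 = norm(b0) q_1.\<close>

lemma transpose_diff: "transpose (A - B) = transpose A - transpose (B :: 'a::ring_1^'n^'m)"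
  by (simp add: transpose_def vec_eq_iff)

lemma inner_symmetric_matrix:
  fixes M :: "real^'n^'n"
  assumes "transpose M = M"
  shows "(M *v x) \<bullet> y = x \<bullet> (M *v y)"
  by (metis assms dot_lmul_matrix transpose_matrix_vector)

lemma gram_matrix_invertible:
  fixes C :: "real^'m^'n"
  assumes "inj ((*v) C)"
  shows "invertible (transpose C ** C)"
proof -
  have "x = 0" if "(transpose C ** C) *v x = 0" for x
  proof -
    have "(C *v x) \<bullet> (C *v x) = x \<bullet> ((transpose C ** C) *v x)"
      by (metis dot_lmul_matrix matrix_vector_mul_assoc vector_transpose_matrix transpose_transpose)
    then have "C *v x = 0" using that by simp
    then show "x = 0" using assms by (metis inj_eq matrix_vector_mult_0_right)
  qed
  then show ?thesis using matrix_left_invertible_ker invertible_left_inverse by blast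
qed

lemma matrix_inv_symmetric:
  fixes A :: "real^'n^'n"
  assumes "invertible A" and "transpose A = A"
  shows "transpose (matrix_inv A) = matrix_inv A"
proof -
  have inv: "A ** matrix_inv A = mat 1"
    using assms(1) unfolding matrix_inv_def invertible_def by (metis (mono_tags, lifting) someI_ex)
  have "transpose (matrix_inv A) ** A = mat 1"
    by (metis assms(2) inv matrix_transpose_mul transpose_mat)
  then show ?thesis by (metis inv matrix_mul_assoc matrix_mul_lid matrix_mul_rid)
qed

lemma proj_null_symmetric:
  fixes C :: "real^'m^'n"
  assumes "rank C = CARD('m)"
  shows "transpose (proj_null C) = proj_null C"
proof -
  have "invertible (transpose C ** C)"
    using assms full_rank_injective gram_matrix_invertible by blast
  then have "transpose (matrix_inv (transpose C ** C)) = matrix_inv (transpose C ** C)"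
    by (simp add: matrix_inv_symmetric matrix_transpose_mul)
  then show ?thesis
    by (simp add: proj_null_def transpose_diff matrix_transpose_mul matrix_mul_assoc)
qed

lemma lanczos_q_0 [simp]: "lanczos_q M b 0 = 0"
  by (simp add: lanczos_q_def)

lemma lanczos_q_1: "lanczos_q M b (Suc 0) = (1 / norm b) *\<^sub>R b"
  by (simp add: lanczos_q_def Let_def split: prod.splits)

lemma lanczos_q_Suc_Suc:
  "lanczos_q M b (Suc (Suc n)) =
     (1 / norm (lanczos_qhat M b (Suc (Suc n)))) *\<^sub>R lanczos_qhat M b (Suc (Suc n))"
  and lanczos_beta_Suc_Suc:
  "lanczos_beta M b (Suc (Suc n)) = norm (lanczos_qhat M b (Suc (Suc n)))"
proof -
  obtain qp qc bc where st: "lanczos_state M b n = (qp, qc, bc)" by (metis prod.exhaust)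
  have "lanczos_qhat M b (Suc (Suc n)) = M *v qc - (qc \<bullet> (M *v qc)) *\<^sub>R qc - bc *\<^sub>R qp"
    by (simp add: lanczos_qhat_def lanczos_alpha_def lanczos_q_def lanczos_beta_def st Let_def)
  then show "lanczos_q M b (Suc (Suc n)) =
      (1 / norm (lanczos_qhat M b (Suc (Suc n)))) *\<^sub>R lanczos_qhat M b (Suc (Suc n))"
    and "lanczos_beta M b (Suc (Suc n)) = norm (lanczos_qhat M b (Suc (Suc n)))"
    by (simp_all add: lanczos_q_def lanczos_beta_def st Let_def)
qed

lemma lanczos_three_term:
  assumes "1 \<le> j"
  shows "M *v lanczos_q M b j = lanczos_qhat M b (Suc j) + lanczos_alpha M b j *\<^sub>R lanczos_q M b j
     + lanczos_beta M b j *\<^sub>R lanczos_q M b (j - 1)"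
  using assms by (simp add: lanczos_qhat_def algebra_simps)

lemma lanczos_qhat_eq_beta_q:
  assumes "2 \<le> j" and "lanczos_beta M b j \<noteq> 0"
  shows "lanczos_qhat M b j = lanczos_beta M b j *\<^sub>R lanczos_q M b j"
proof -
  obtain n where "j = Suc (Suc n)" using assms(1) by (metis add_2_eq_Suc le_Suc_ex)
  then show ?thesis using assms(2) by (simp add: lanczos_q_Suc_Suc lanczos_beta_Suc_Suc)
qed

definition lanczos_orthonormal :: "real^'n^'n \<Rightarrow> real^'n \<Rightarrow> nat \<Rightarrow> bool" where
  "lanczos_orthonormal M b m \<longleftrightarrow> (\<forall>i l. i \<le> m \<longrightarrow> l \<le> m \<longrightarrow>
     lanczos_q M b i \<bullet> lanczos_q M b l = (if i = l \<and> 1 \<le> i then 1 else 0))"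

lemma lanczos_orthonormalD:
  "lanczos_orthonormal M b m \<Longrightarrow> i \<le> m \<Longrightarrow> l \<le> m \<Longrightarrow>
     lanczos_q M b i \<bullet> lanczos_q M b l = (if i = l \<and> 1 \<le> i then 1 else 0)"
  unfolding lanczos_orthonormal_def by blast

text \<open>Only q_m and q_(m-1) have to be removed from M q_m: by symmetry
  q_i \<bullet> M q_m = M q_i \<bullet> q_m, and M q_i lies in the span of q_(i-1), q_i, q_(i+1).\<close>
lemma lanczos_qhat_orthogonal:
  assumes sym: "transpose M = M"
    and beta_nz: "\<forall>j\<in>{2..m}. lanczos_beta M b j \<noteq> 0"
    and orth: "lanczos_orthonormal M b m" and m: "1 \<le> m" and i: "i \<le> m"
  shows "lanczos_qhat M b (Suc m) \<bullet> lanczos_q M b i = 0"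
proof -
  let ?q = "lanczos_q M b" and ?a = "lanczos_alpha M b" and ?be = "lanczos_beta M b"
  note on = lanczos_orthonormalD[OF orth]
  have qhat: "lanczos_qhat M b (Suc m) \<bullet> ?q i
      = (M *v ?q m) \<bullet> ?q i - ?a m * (?q m \<bullet> ?q i) - ?be m * (?q (m - 1) \<bullet> ?q i)"
    by (simp add: lanczos_qhat_def inner_diff_left)
  have Mq: "(M *v ?q m) \<bullet> ?q i
      = ?q m \<bullet> (lanczos_qhat M b (Suc i) + ?a i *\<^sub>R ?q i + ?be i *\<^sub>R ?q (i - 1))" if "1 \<le> i"
    using inner_symmetric_matrix[OF sym] lanczos_three_term[OF that] by metis
  consider "i = 0" | "i = m" | "1 \<le> i" "m = Suc i" | "1 \<le> i" "Suc (Suc i) \<le> m"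
    using i by linarith
  then show ?thesis
  proof cases
    case 1
    then show ?thesis by simp
  next
    case 2
    have "m - 1 \<noteq> m" using m by simp
    with 2 show ?thesis
      using qhat on[of m m] on[of "m - 1" m] by (simp add: lanczos_alpha_def inner_commute)
  next
    case 3
    have "lanczos_qhat M b (Suc i) = ?be m *\<^sub>R ?q m"
      using 3 beta_nz lanczos_qhat_eq_beta_q[of m M b] by simp
    then have "(M *v ?q m) \<bullet> ?q i = ?be m"
      using Mq 3 on[of m m] on[of m i] on[of m "i - 1"] by (simp add: inner_add_right)
    then show ?thesis
      using qhat 3 on[of m i] on[of "m - 1" i] by simp
  next
    case 4
    have "lanczos_qhat M b (Suc i) = ?be (Suc i) *\<^sub>R ?q (Suc i)"
      using 4 beta_nz lanczos_qhat_eq_beta_q[of "Suc i" M b] by simp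
    moreover have "m - 1 \<noteq> i" using 4 by linarith
    ultimately have "(M *v ?q m) \<bullet> ?q i = 0"
      using Mq 4 on[of m "Suc i"] on[of m i] on[of m "i - 1"] by (simp add: inner_add_right)
    with \<open>m - 1 \<noteq> i\<close> show ?thesis
      using qhat 4 on[of m i] on[of "m - 1" i] by simp
  qed
qed

lemma lanczos_orthonormal:
  assumes sym: "transpose M = M" and b: "b \<noteq> 0"
    and beta_nz: "\<forall>j\<in>{2..m}. lanczos_beta M b j \<noteq> 0"
  shows "lanczos_orthonormal M b m"
  using beta_nz
proof (induction m)
  case 0
  then show ?case by (simp add: lanczos_orthonormal_def)
next
  case (Suc m)
  let ?q = "lanczos_q M b" and ?h = "lanczos_qhat M b (Suc m)"
  have orth: "lanczos_orthonormal M b m" using Suc by simp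
  have beta: "2 \<le> Suc m \<Longrightarrow> norm ?h \<noteq> 0"
    using Suc.prems lanczos_beta_Suc_Suc[of M b "m - 1"] by force
  show ?case
  proof (cases m)
    case 0
    then show ?thesis
      using b lanczos_q_1[of M b] unfolding lanczos_orthonormal_def
      by (auto simp: le_Suc_eq dot_square_norm power2_eq_square)
  next
    case (Suc n)
    have q: "?q (Suc m) = (1 / norm ?h) *\<^sub>R ?h"
      using Suc by (simp add: lanczos_q_Suc_Suc)
    have "?q (Suc m) \<bullet> ?q (Suc m) = 1"
      using beta Suc unfolding q by (simp add: dot_square_norm power2_eq_square)
    moreover have "?q (Suc m) \<bullet> ?q i = 0" if "i \<le> m" for i
      using lanczos_qhat_orthogonal[OF sym _ orth _ that] Suc.prems Suc unfolding q by simp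
    ultimately show ?thesis
      using orth unfolding lanczos_orthonormal_def by (auto simp: le_Suc_eq inner_commute)
  qed
qed

definition lanczos_Q :: "real^'n^'n \<Rightarrow> real^'n \<Rightarrow> nat \<Rightarrow> (nat \<Rightarrow> real) \<Rightarrow> real^'n" where
  "lanczos_Q M b k v = (\<Sum>j\<in>{1..k}. v j *\<^sub>R lanczos_q M b j)"

lemma lanczos_Q_cong:
  "(\<And>i. i \<in> {1..k} \<Longrightarrow> u i = v i) \<Longrightarrow> lanczos_Q M b k u = lanczos_Q M b k v"
  unfolding lanczos_Q_def by (rule sum.cong) simp_all

lemma lanczos_Q_add: "lanczos_Q M b k (\<lambda>i. u i + v i) = lanczos_Q M b k u + lanczos_Q M b k v"
  by (simp add: lanczos_Q_def scaleR_add_left sum.distrib)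

lemma lanczos_Q_scale: "lanczos_Q M b k (\<lambda>i. c * v i) = c *\<^sub>R lanczos_Q M b k v"
  by (simp add: lanczos_Q_def scaleR_sum_right)

lemma lanczos_Q_delta:
  assumes "l \<in> {1..k}"
  shows "lanczos_Q M b k (\<lambda>i. if i = l then c else 0) = c *\<^sub>R lanczos_q M b l"
proof -
  have eq: "(\<lambda>j. (if j = l then c else 0) *\<^sub>R lanczos_q M b j)
      = (\<lambda>j. if j = l then c *\<^sub>R lanczos_q M b j else 0)"
    by auto
  show ?thesis using assms unfolding lanczos_Q_def eq by (simp add: sum.delta')
qed

lemma lanczos_Q_project_q:
  assumes "lanczos_orthonormal M b k" and "l \<le> k"
  shows "lanczos_Q M b k (\<lambda>i. lanczos_q M b i \<bullet> lanczos_q M b l) = lanczos_q M b l"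
proof (cases "l = 0")
  case False
  then have "lanczos_Q M b k (\<lambda>i. lanczos_q M b i \<bullet> lanczos_q M b l)
      = lanczos_Q M b k (\<lambda>i. if i = l then 1 else 0)"
    using assms by (intro lanczos_Q_cong) (simp add: lanczos_orthonormalD)
  then show ?thesis
    using False assms(2) by (simp add: lanczos_Q_delta)
qed (simp add: lanczos_Q_def)

lemma inner_lanczos_Q:
  assumes "lanczos_orthonormal M b k" and "b \<noteq> 0" and "1 \<le> k"
  shows "b \<bullet> lanczos_Q M b k v = norm b * v 1"
proof -
  have "b = norm b *\<^sub>R lanczos_q M b 1" using assms(2) by (simp add: lanczos_q_1)
  then have "b \<bullet> lanczos_Q M b k v = norm b * (lanczos_Q M b k v \<bullet> lanczos_q M b 1)"
    by (metis inner_commute inner_scaleR_left)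
  also have "lanczos_Q M b k v \<bullet> lanczos_q M b 1 = (\<Sum>j\<in>{1..k}. if j = 1 then v 1 else 0)"
    unfolding lanczos_Q_def inner_sum_left
    using assms(1,3) by (intro sum.cong) (auto simp: lanczos_orthonormalD)
  finally show ?thesis using assms(3) by simp
qed

lemma lanczos_Q_T_column:
  assumes sym: "transpose M = M" and b: "b \<noteq> 0"
    and beta_nz: "\<forall>j\<in>{2..k}. lanczos_beta M b j \<noteq> 0" and j: "1 \<le> j" "j \<le> k"
  shows "lanczos_Q M b k (\<lambda>i. lanczos_T M b i j)
       = M *v lanczos_q M b j - (if j = k then lanczos_qhat M b (Suc k) else 0)"
proof -
  let ?q = "lanczos_q M b" and ?Q = "lanczos_Q M b k"
  let ?h = "lanczos_qhat M b (Suc j)"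
  have orth: "lanczos_orthonormal M b k" using lanczos_orthonormal[OF sym b beta_nz] .
  have "?Q (\<lambda>i. lanczos_T M b i j) = ?Q (\<lambda>i. ?q i \<bullet> ?h
      + lanczos_alpha M b j * (?q i \<bullet> ?q j) + lanczos_beta M b j * (?q i \<bullet> ?q (j - 1)))"
    unfolding lanczos_T_def lanczos_three_term[OF j(1)] by (simp add: inner_add_right)
  also have "\<dots> = ?Q (\<lambda>i. ?q i \<bullet> ?h) + lanczos_alpha M b j *\<^sub>R ?q j
      + lanczos_beta M b j *\<^sub>R ?q (j - 1)"
    using orth j by (simp add: lanczos_Q_add lanczos_Q_scale lanczos_Q_project_q)
  also have "?Q (\<lambda>i. ?q i \<bullet> ?h) = (if j = k then 0 else ?h)"
  proof (cases "j = k")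
    case True
    then have "?Q (\<lambda>i. ?q i \<bullet> ?h) = ?Q (\<lambda>i. 0)"
      using lanczos_qhat_orthogonal[OF sym beta_nz orth] j
      by (intro lanczos_Q_cong) (simp add: inner_commute)
    then show ?thesis using True by (simp add: lanczos_Q_def)
  next
    case False
    then have "?h = lanczos_beta M b (Suc j) *\<^sub>R ?q (Suc j)"
      using beta_nz j lanczos_qhat_eq_beta_q[of "Suc j" M b] by simp
    then show ?thesis
      using False j orth by (simp add: lanczos_Q_scale lanczos_Q_project_q)
  qed
  finally show ?thesis unfolding lanczos_three_term[OF j(1)] by (cases "j = k") simp_all
qed

lemma lanczos_relation:
  assumes sym: "transpose M = M" and b: "b \<noteq> 0"
    and beta_nz: "\<forall>j\<in>{2..k}. lanczos_beta M b j \<noteq> 0" and k: "1 \<le> k"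
  shows "(M - mu *\<^sub>R mat 1) *v lanczos_Q M b k v
     = lanczos_Q M b k (shifted_apply (lanczos_T M b) mu k v) + v k *\<^sub>R lanczos_qhat M b (Suc k)"
proof -
  let ?q = "lanczos_q M b" and ?Q = "lanczos_Q M b k" and ?T = "lanczos_T M b"
  let ?h = "lanczos_qhat M b (Suc k)"
  have "M *v ?Q v = (\<Sum>j\<in>{1..k}. v j *\<^sub>R (M *v ?q j))"
    by (simp add: lanczos_Q_def matrix_vector_mult_scaleR
        linear_sum[OF matrix_vector_mul_linear] o_def)
  also have "\<dots> = (\<Sum>j\<in>{1..k}. v j *\<^sub>R ?Q (\<lambda>i. ?T i j) + (if j = k then v k *\<^sub>R ?h else 0))"
  proof (intro sum.cong)
    fix j assume "j \<in> {1..k}"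
    then have "M *v ?q j = ?Q (\<lambda>i. ?T i j) + (if j = k then ?h else 0)"
      using lanczos_Q_T_column[OF sym b beta_nz, of j] by simp
    then show "v j *\<^sub>R (M *v ?q j) = v j *\<^sub>R ?Q (\<lambda>i. ?T i j) + (if j = k then v k *\<^sub>R ?h else 0)"
      by (simp add: scaleR_add_right)
  qed simp
  also have "\<dots> = (\<Sum>j\<in>{1..k}. v j *\<^sub>R ?Q (\<lambda>i. ?T i j)) + v k *\<^sub>R ?h"
    using k by (simp add: sum.distrib)
  also have "(\<Sum>j\<in>{1..k}. v j *\<^sub>R ?Q (\<lambda>i. ?T i j)) = ?Q (\<lambda>i. \<Sum>j\<in>{1..k}. ?T i j * v j)"
    unfolding lanczos_Q_def scaleR_sum_right
    by (subst sum.swap) (simp add: scaleR_sum_left mult.commute)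
  finally have "M *v ?Q v = ?Q (\<lambda>i. \<Sum>j\<in>{1..k}. ?T i j * v j) + v k *\<^sub>R ?h" .
  moreover have "?Q (shifted_apply ?T mu k v) = ?Q (\<lambda>i. \<Sum>j\<in>{1..k}. ?T i j * v j) - mu *\<^sub>R ?Q v"
    using lanczos_Q_add[of M b k _ "\<lambda>i. - mu * v i"] lanczos_Q_scale[of M b k "- mu" v]
    by (simp add: shifted_apply_def)
  ultimately show ?thesis
    by (simp add: matrix_vector_mult_diff_rdistrib matrix_scaleR_vector_ac[symmetric])
qed

theorem proposition3p2:
  fixes A :: "real^'n^'n" and C :: "real^'m^'n" and b0 :: "real^'n"
    and gamma mu :: real and k :: nat and w :: "nat \<Rightarrow> real"
  defines "P \<equiv> proj_null C"
  defines "M \<equiv> P ** A ** P"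
  defines "T \<equiv> lanczos_T M b0"
  defines "y \<equiv> shifted_apply T mu k w"
  defines "z \<equiv> (\<Sum>j\<in>{1..k}. w j *\<^sub>R lanczos_q M b0 j)"
  assumes symA: "transpose A = A"
    and rankC: "rank C = CARD('m)"
    and b0_null: "transpose C *v b0 = 0"
    and b0_nz: "b0 \<noteq> 0"
    and gamma_pos: "gamma > 0"
    and k_pos: "k \<ge> 1"
    and beta_nz: "\<forall>j\<in>{2..k}. lanczos_beta M b0 j \<noteq> 0"
    and minimizer: "rQEPmin_minimizer T k gamma (norm b0) mu w"
  shows "(M - mu *\<^sub>R mat 1) *v ((M - mu *\<^sub>R mat 1) *v z) - (1 / gamma^2) *\<^sub>R ((b0 \<bullet> z) *\<^sub>R b0)
         = y k *\<^sub>R lanczos_qhat M b0 (k + 1)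
           + w k *\<^sub>R ((M - mu *\<^sub>R mat 1) *v lanczos_qhat M b0 (k + 1))"
proof -
  let ?S = "M - mu *\<^sub>R mat 1" and ?Q = "lanczos_Q M b0 k" and ?h = "lanczos_qhat M b0 (Suc k)"
  have sym: "transpose M = M"
    using proj_null_symmetric[OF rankC] symA
    by (simp add: M_def P_def matrix_transpose_mul matrix_mul_assoc)
  note relation = lanczos_relation[OF sym b0_nz beta_nz k_pos, folded T_def]
  have z: "z = ?Q w" by (simp add: z_def lanczos_Q_def)
  have feasible: "rQEP_feasible T k gamma (norm b0) mu w"
    using minimizer by (simp add: rQEPmin_minimizer_def)
  have "?Q (shifted_apply T mu k y) = ?Q (\<lambda>i. if i = 1 then norm b0 ^ 2 / gamma ^ 2 * w 1 else 0)"
    using feasible by (intro lanczos_Q_cong) (simp add: rQEP_feasible_def y_def)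
  also have "\<dots> = (norm b0 ^ 2 / gamma ^ 2 * w 1) *\<^sub>R lanczos_q M b0 1"
    using k_pos by (simp add: lanczos_Q_delta)
  also have "\<dots> = (1 / gamma ^ 2) *\<^sub>R ((b0 \<bullet> z) *\<^sub>R b0)"
    using inner_lanczos_Q[OF lanczos_orthonormal[OF sym b0_nz beta_nz] b0_nz k_pos] b0_nz
    by (simp add: z lanczos_q_1 power2_eq_square)
  finally have "?Q (shifted_apply T mu k y) = (1 / gamma ^ 2) *\<^sub>R ((b0 \<bullet> z) *\<^sub>R b0)" .
  moreover have "?S *v z = ?Q y + w k *\<^sub>R ?h"
    using relation by (simp add: z y_def)
  then have "?S *v (?S *v z) = ?Q (shifted_apply T mu k y) + y k *\<^sub>R ?h + w k *\<^sub>R (?S *v ?h)"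
    using relation by (simp add: matrix_vector_right_distrib matrix_vector_mult_scaleR)
  ultimately show ?thesis by simp
qed

end
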